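(* Let $\mathcal{G}\subset\mathcal{S}$ with harmonic analogue $\mathcal{G}_H^0$. Then $\mathcal{G}$ is compact (with respect to the topology of locally uniform convergence in $\mathbb{D}$) if and only if $\mathcal{G}_H^0$ is compact.
   Context: $\mathbb{D}$ is the open unit disk. $\mathcal{S}$ is the class of analytic univalent functions $f$ in $\mathbb{D}$ with $f(0)=0$, $f'(0)=1$. For $\mathcal{G}\subset\mathcal{S}$, its harmonic analogue $\mathcal{G}_H^0$ is the class of harmonic functions $f=h+\bar g$ ($h,g$ analytic in $\mathbb{D}$) such that $h+\epsilon g\in\mathcal{G}$ for every $\epsilon\in\mathbb{C}$ with $|\epsilon|=1$. *)

theory Defs
  imports "HOL-Complex_Analysis.Complex_Analysis"
begin

abbreviation unit_disk :: "complex set" where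
  "unit_disk \<equiv> ball 0 1"

definition class_S :: "(complex \<Rightarrow> complex) set" where
  "class_S = {f. f holomorphic_on unit_disk \<and> inj_on f unit_disk \<and> f 0 = 0 \<and> deriv f 0 = 1}"

definition harmonic_analogue :: "(complex \<Rightarrow> complex) set \<Rightarrow> (complex \<Rightarrow> complex) set" where
  "harmonic_analogue G = {f. \<exists>h g. h holomorphic_on unit_disk \<and> g holomorphic_on unit_disk \<and>
      (\<forall>z\<in>unit_disk. f z = h z + cnj (g z)) \<and>
      (\<forall>\<epsilon>::complex. norm \<epsilon> = 1 \<longrightarrow>
          (\<exists>\<phi>\<in>G. \<forall>z\<in>unit_disk. \<phi> z = h z + \<epsilon> * g z))}"

definition lu_topology :: "(complex \<Rightarrow> complex) topology" where
  "lu_topology = topology (\<lambda>U. \<forall>f\<in>U. \<exists>K e. compact K \<and> K \<subseteq> unit_disk \<and> e > 0 \<and>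
      {g. \<forall>z\<in>K. dist (g z) (f z) < e} \<subseteq> U)"

end

theory Submission
  imports Defs
begin

(*
  Compactness in lu_topology sees a function only through its values on the disk, and
  identifying functions that agree on the disk gives a Hausdorff space; hence saturated
  compact sets are closed, and compactness passes between sets that agree up to this
  identification.

  If G is compact, encode f = h + cnj g by the pair (h + g, h - g). The pairs for which
  h + eps g lies in G for every |eps| = 1 form a closed subset of G x G, hence a compact
  one, and f depends continuously on the pair; so the harmonic analogue is compact.

  Conversely, a compact harmonic analogue is closed and contains G, hence contains the
  closure of G. Locally uniform limits of analytic functions are analytic, and an analytic
  h + cnj g has analytic cnj g, so g is constant, and g = 0 since h + g and h - g vanish
  at 0. Thus the closure of G agrees with G on the disk, and G is compact.
*)

lemma openin_lu_topology:
  "openin lu_topology U \<longleftrightarrow>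
     (\<forall>f\<in>U. \<exists>K e. compact K \<and> K \<subseteq> unit_disk \<and> e > 0 \<and> {g. \<forall>z\<in>K. dist (g z) (f z) < e} \<subseteq> U)"
proof -
  define lu_open where "lu_open U \<longleftrightarrow>
     (\<forall>f\<in>U. \<exists>K e. compact K \<and> K \<subseteq> unit_disk \<and> e > 0 \<and> {g. \<forall>z\<in>K. dist (g z) (f z) < e} \<subseteq> U)"
    for U :: "(complex \<Rightarrow> complex) set"
  have "istopology lu_open"
    unfolding istopology_def
  proof (intro conjI allI impI)
    fix S T assume S: "lu_open S" and T: "lu_open T"
    show "lu_open (S \<inter> T)"
      unfolding lu_open_def
    proof
      fix f assume "f \<in> S \<inter> T"
      then obtain K1 e1 K2 e2 where
        "compact K1" "K1 \<subseteq> unit_disk" "e1 > 0" "{g. \<forall>z\<in>K1. dist (g z) (f z) < e1} \<subseteq> S"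
        "compact K2" "K2 \<subseteq> unit_disk" "e2 > 0" "{g. \<forall>z\<in>K2. dist (g z) (f z) < e2} \<subseteq> T"
        using S T unfolding lu_open_def by (meson IntD1 IntD2)
      then show "\<exists>K e. compact K \<and> K \<subseteq> unit_disk \<and> e > 0 \<and>
                   {g. \<forall>z\<in>K. dist (g z) (f z) < e} \<subseteq> S \<inter> T"
        by (intro exI[of _ "K1 \<union> K2"] exI[of _ "min e1 e2"]) (auto simp: compact_Un)
    qed
  next
    fix \<K> assume "\<forall>K\<in>\<K>. lu_open K"
    then show "lu_open (\<Union>\<K>)"
      unfolding lu_open_def by (meson Union_iff subset_iff)
  qed
  then show ?thesis
    unfolding lu_topology_def lu_open_def[abs_def] by (simp add: topology_inverse')
qed

lemma topspace_lu_topology [simp]: "topspace lu_topology = UNIV"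
proof -
  have "openin lu_topology UNIV"
    unfolding openin_lu_topology by (intro ballI exI[of _ "{}"] exI[of _ "1::real"]) auto
  then show ?thesis
    using openin_subset by blast
qed

text \<open>The slack \<open>d < e\<close> makes these balls open without any continuity of \<open>g\<close>.\<close>
definition lu_ball :: "(complex \<Rightarrow> complex) \<Rightarrow> complex set \<Rightarrow> real \<Rightarrow> (complex \<Rightarrow> complex) set" where
  "lu_ball f K e = {g. \<exists>d<e. \<forall>z\<in>K. dist (g z) (f z) \<le> d}"

lemma centre_in_lu_ball: "0 < e \<Longrightarrow> f \<in> lu_ball f K e"
  unfolding lu_ball_def by force

lemma lu_ball_dist_less: "g \<in> lu_ball f K e \<Longrightarrow> z \<in> K \<Longrightarrow> dist (g z) (f z) < e"
  unfolding lu_ball_def by force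

lemma openin_lu_ball:
  assumes "compact K" "K \<subseteq> unit_disk"
  shows "openin lu_topology (lu_ball f K e)"
  unfolding openin_lu_topology
proof
  fix g assume "g \<in> lu_ball f K e"
  then obtain d where d: "d < e" "\<forall>z\<in>K. dist (g z) (f z) \<le> d"
    by (auto simp: lu_ball_def)
  have "{h. \<forall>z\<in>K. dist (h z) (g z) < (e - d) / 2} \<subseteq> lu_ball f K e"
  proof
    fix h assume h: "h \<in> {h. \<forall>z\<in>K. dist (h z) (g z) < (e - d) / 2}"
    have "\<forall>z\<in>K. dist (h z) (f z) \<le> d + (e - d) / 2"
      using h d(2) by (smt (verit, best) dist_triangle mem_Collect_eq)
    moreover have "d + (e - d) / 2 < e"
      using d(1) by (simp add: field_simps)
    ultimately show "h \<in> lu_ball f K e"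
      unfolding lu_ball_def by blast
  qed
  then show "\<exists>K' e'. compact K' \<and> K' \<subseteq> unit_disk \<and> e' > 0 \<and>
               {h. \<forall>z\<in>K'. dist (h z) (g z) < e'} \<subseteq> lu_ball f K e"
    using assms d(1) by (intro exI[of _ K] exI[of _ "(e - d) / 2"]) auto
qed

lemma lu_separated_if_differ:
  assumes "z \<in> unit_disk" "f z \<noteq> g z"
  shows "\<exists>U V. openin lu_topology U \<and> openin lu_topology V \<and> f \<in> U \<and> g \<in> V \<and> disjnt U V"
proof -
  define d where "d = dist (f z) (g z) / 2"
  have "d > 0"
    using assms(2) by (simp add: d_def)
  moreover have "disjnt (lu_ball f {z} d) (lu_ball g {z} d)"
    unfolding disjnt_def
  proof (rule equals0I)
    fix h assume "h \<in> lu_ball f {z} d \<inter> lu_ball g {z} d"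
    then have "dist (h z) (f z) < d" "dist (h z) (g z) < d"
      by (auto intro: lu_ball_dist_less)
    then show False
      using dist_triangle3[of "f z" "g z" "h z"] by (simp add: d_def)
  qed
  ultimately show ?thesis
    using assms(1) openin_lu_ball[of "{z}"]
    by (metis centre_in_lu_ball compact_sing empty_subsetI insert_subset)
qed

lemma lu_closure_ofE:
  assumes "f \<in> lu_topology closure_of A" "compact K" "K \<subseteq> unit_disk" "e > 0"
  obtains \<phi> where "\<phi> \<in> A" "\<forall>z\<in>K. dist (\<phi> z) (f z) < e"
  using assms openin_lu_ball[OF assms(2,3)] centre_in_lu_ball lu_ball_dist_less
  unfolding in_closure_of by metis

definition disk_saturation :: "(complex \<Rightarrow> complex) set \<Rightarrow> (complex \<Rightarrow> complex) set" where
  "disk_saturation A = {f. \<exists>g\<in>A. \<forall>z\<in>unit_disk. f z = g z}"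

lemma subset_disk_saturation: "A \<subseteq> disk_saturation A"
  unfolding disk_saturation_def by blast

lemma disk_saturation_mono: "A \<subseteq> B \<Longrightarrow> disk_saturation A \<subseteq> disk_saturation B"
  unfolding disk_saturation_def by blast

lemma disk_saturation_openin:
  assumes "openin lu_topology U"
  shows "disk_saturation U = U"
proof
  show "disk_saturation U \<subseteq> U"
  proof
    fix f assume "f \<in> disk_saturation U"
    then obtain g where "g \<in> U" and agree: "\<forall>z\<in>unit_disk. f z = g z"
      unfolding disk_saturation_def by blast
    then obtain K e where K: "K \<subseteq> unit_disk" "e > 0" "{h. \<forall>z\<in>K. dist (h z) (g z) < e} \<subseteq> U"
      using assms unfolding openin_lu_topology by meson
    have "\<forall>z\<in>K. dist (f z) (g z) < e"
      using K(1,2) agree by auto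
    then show "f \<in> U"
      using K(3) by blast
  qed
qed (rule subset_disk_saturation)

text \<open>Open sets are saturated, so a cover of one of the two sets is also a cover of the other.\<close>
lemma compactin_lu_transfer:
  assumes compact: "compactin lu_topology A"
    and BA: "B \<subseteq> disk_saturation A" and AB: "A \<subseteq> disk_saturation B"
  shows "compactin lu_topology B"
  unfolding compactin_def
proof (intro conjI allI impI)
  fix \<U> assume \<U>: "(\<forall>U\<in>\<U>. openin lu_topology U) \<and> B \<subseteq> \<Union>\<U>"
  then have "A \<subseteq> disk_saturation (\<Union>\<U>)"
    using AB disk_saturation_mono by blast
  also have "disk_saturation (\<Union>\<U>) = \<Union>\<U>"
    using \<U> by (simp add: disk_saturation_openin openin_Union)
  finally obtain \<F> where \<F>: "finite \<F>" "\<F> \<subseteq> \<U>" "A \<subseteq> \<Union>\<F>"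
    using compact[unfolded compactin_def, THEN conjunct2, rule_format, of \<U>] \<U> by blast
  have "B \<subseteq> disk_saturation (\<Union>\<F>)"
    using BA \<F>(3) disk_saturation_mono by blast
  also have "disk_saturation (\<Union>\<F>) = \<Union>\<F>"
    using \<U> \<F>(2) by (intro disk_saturation_openin openin_Union) blast
  finally show "\<exists>\<F>. finite \<F> \<and> \<F> \<subseteq> \<U> \<and> B \<subseteq> \<Union>\<F>"
    using \<F>(1,2) by blast
qed simp

lemma compactin_disk_saturation:
  "compactin lu_topology A \<Longrightarrow> compactin lu_topology (disk_saturation A)"
  by (erule compactin_lu_transfer[OF _ order_refl])
    (rule order_trans[OF subset_disk_saturation subset_disk_saturation])

lemma compactin_separated_from_point:
  assumes compact: "compactin X S" and x: "x \<in> topspace X"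
    and separated: "\<And>y. y \<in> S \<Longrightarrow> \<exists>U V. openin X U \<and> openin X V \<and> y \<in> U \<and> x \<in> V \<and> disjnt U V"
  obtains V where "openin X V" "x \<in> V" "disjnt S V"
proof -
  have "\<forall>y\<in>S. \<exists>U V. openin X U \<and> openin X V \<and> y \<in> U \<and> x \<in> V \<and> U \<inter> V = {}"
    using separated by (simp add: disjnt_def)
  from bchoice[OF this] obtain U
    where "\<forall>y\<in>S. \<exists>V. openin X (U y) \<and> openin X V \<and> y \<in> U y \<and> x \<in> V \<and> U y \<inter> V = {}" ..
  from bchoice[OF this] obtain V
    where UV: "\<forall>y\<in>S. openin X (U y) \<and> openin X (V y) \<and> y \<in> U y \<and> x \<in> V y \<and> U y \<inter> V y = {}" ..
  then have "\<forall>W\<in>U ` S. openin X W" "S \<subseteq> \<Union>(U ` S)"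
    by auto
  then obtain \<F> where "finite \<F>" "\<F> \<subseteq> U ` S" "S \<subseteq> \<Union>\<F>"
    using compact[unfolded compactin_def, THEN conjunct2, rule_format, of "U ` S"] by blast
  moreover obtain S0 where "S0 \<subseteq> S" "finite S0" "\<F> = U ` S0"
    using finite_subset_image[OF \<open>finite \<F>\<close> \<open>\<F> \<subseteq> U ` S\<close>] by blast
  ultimately have S0: "finite S0" "S0 \<subseteq> S" "S \<subseteq> (\<Union>y\<in>S0. U y)"
    by auto
  show ?thesis
  proof (rule that)
    show "openin X ((\<Inter>y\<in>S0. V y) \<inter> topspace X)"
      using S0 UV by (intro openin_INT) auto
    show "x \<in> (\<Inter>y\<in>S0. V y) \<inter> topspace X"
      using S0 UV x by auto
    have "s \<notin> (\<Inter>y\<in>S0. V y)" if "s \<in> S" for s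
    proof -
      obtain y where "y \<in> S0" "s \<in> U y"
        using S0(3) \<open>s \<in> S\<close> by blast
      then show ?thesis
        using S0(2) UV by blast
    qed
    then show "disjnt S ((\<Inter>y\<in>S0. V y) \<inter> topspace X)"
      unfolding disjnt_iff by blast
  qed
qed

lemma closedin_disk_saturation:
  assumes "compactin lu_topology A"
  shows "closedin lu_topology (disk_saturation A)"
proof -
  have "\<exists>V. openin lu_topology V \<and> f \<in> V \<and> V \<subseteq> - disk_saturation A"
    if f: "f \<notin> disk_saturation A" for f
  proof -
    have separated: "\<exists>U V. openin lu_topology U \<and> openin lu_topology V \<and> y \<in> U \<and> f \<in> V \<and> disjnt U V"
      if y: "y \<in> disk_saturation A" for y
    proof -
      obtain a where "a \<in> A" and ya: "\<forall>z\<in>unit_disk. y z = a z"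
        using y unfolding disk_saturation_def by blast
      then have "\<not> (\<forall>z\<in>unit_disk. f z = a z)"
        using f unfolding disk_saturation_def by blast
      then obtain z where "z \<in> unit_disk" "y z \<noteq> f z"
        using ya by auto
      then show ?thesis
        by (rule lu_separated_if_differ)
    qed
    have "f \<in> topspace lu_topology"
      by simp
    then obtain V where "openin lu_topology V" "f \<in> V" "disjnt (disk_saturation A) V"
      using compactin_separated_from_point[OF compactin_disk_saturation[OF assms] _ separated] by blast
    then show ?thesis
      by (auto simp: disjnt_iff)
  qed
  then have "openin lu_topology (- disk_saturation A)"
    using openin_subopen[of lu_topology "- disk_saturation A"] by blast
  then show ?thesis
    by (simp add: closedin_def Compl_eq_Diff_UNIV)
qed

lemma continuous_map_lu_pointwise:
  fixes M :: "complex \<Rightarrow> complex \<Rightarrow> complex"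
  assumes C: "C > 0" and lipschitz: "\<And>x y x' y'. dist (M x y) (M x' y') \<le> C * (dist x x' + dist y y')"
  shows "continuous_map (prod_topology lu_topology lu_topology) lu_topology
           (\<lambda>p z. M (fst p z) (snd p z))"
  unfolding continuous_map_def
proof (intro conjI allI impI)
  fix U assume U: "openin lu_topology U"
  define P where "P = {p \<in> topspace (prod_topology lu_topology lu_topology). (\<lambda>z. M (fst p z) (snd p z)) \<in> U}"
  show "openin (prod_topology lu_topology lu_topology) P"
    unfolding openin_prod_topology_alt
  proof (intro allI impI)
    fix a b assume "(a, b) \<in> P"
    then have "(\<lambda>z. M (a z) (b z)) \<in> U"
      by (simp add: P_def)
    then obtain K e where K: "compact K" "K \<subseteq> unit_disk" "e > 0"
        and nbhd: "{g. \<forall>z\<in>K. dist (g z) (M (a z) (b z)) < e} \<subseteq> U"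
      using U unfolding openin_lu_topology by meson
    define \<delta> where "\<delta> = e / (2 * C)"
    have "(a', b') \<in> P" if "a' \<in> lu_ball a K \<delta>" "b' \<in> lu_ball b K \<delta>" for a' b'
    proof -
      have "dist (M (a' z) (b' z)) (M (a z) (b z)) < e" if "z \<in> K" for z
      proof -
        have "dist (a' z) (a z) < \<delta>" "dist (b' z) (b z) < \<delta>"
          using \<open>a' \<in> _\<close> \<open>b' \<in> _\<close> \<open>z \<in> K\<close> by (auto intro: lu_ball_dist_less)
        then have "C * (dist (a' z) (a z) + dist (b' z) (b z)) < e"
          using C by (simp add: \<delta>_def field_simps)
        then show ?thesis
          using lipschitz[of "a' z" "b' z" "a z" "b z"] by linarith
      qed
      then show ?thesis
        using nbhd by (auto simp: P_def)
    qed
    then have "lu_ball a K \<delta> \<times> lu_ball b K \<delta> \<subseteq> P"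
      by blast
    moreover have "openin lu_topology (lu_ball a K \<delta>)" "openin lu_topology (lu_ball b K \<delta>)"
      using K by (auto intro: openin_lu_ball)
    moreover have "a \<in> lu_ball a K \<delta>" "b \<in> lu_ball b K \<delta>"
      using K C by (auto intro: centre_in_lu_ball simp: \<delta>_def)
    ultimately show "\<exists>V W. openin lu_topology V \<and> openin lu_topology W \<and> a \<in> V \<and> b \<in> W \<and> V \<times> W \<subseteq> P"
      by blast
  qed
qed simp

text \<open>For \<open>p = (h + g, h - g)\<close> this is \<open>h + T g\<close>.\<close>
definition recombine ::
    "(complex \<Rightarrow> complex) \<Rightarrow> (complex \<Rightarrow> complex) \<times> (complex \<Rightarrow> complex) \<Rightarrow> complex \<Rightarrow> complex" where
  "recombine T p = (\<lambda>z. (fst p z + snd p z) / 2 + T ((fst p z - snd p z) / 2))"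

lemma recombine_sum_diff: "recombine T (\<lambda>z. h z + g z, \<lambda>z. h z - g z) = (\<lambda>z. h z + T (g z))"
  by (simp add: recombine_def field_simps)

lemma recombine_scale_one: "recombine ((*) 1) p = fst p"
  by (auto simp: recombine_def field_simps)

lemma recombine_scale_minus_one: "recombine ((*) (-1)) p = snd p"
  by (auto simp: recombine_def field_simps)

lemma continuous_map_recombine:
  assumes diff: "\<And>u v. T (u - v) = T u - T v" and isometric: "\<And>u. norm (T u) = norm u"
  shows "continuous_map (prod_topology lu_topology lu_topology) lu_topology (recombine T)"
proof -
  have "dist ((x + y) / 2 + T ((x - y) / 2)) ((x' + y') / 2 + T ((x' - y') / 2))
          \<le> 1 * (dist x x' + dist y y')" for x y x' y'
  proof -
    define a b where "a = x - x'" and "b = y - y'"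
    have "(a - b) / 2 = (x - y) / 2 - (x' - y') / 2"
      by (simp add: a_def b_def field_simps)
    then have "T ((a - b) / 2) = T ((x - y) / 2) - T ((x' - y') / 2)"
      by (simp only: diff)
    moreover have "(x + y) / 2 + T ((x - y) / 2) - ((x' + y') / 2 + T ((x' - y') / 2))
                 = (a + b) / 2 + (T ((x - y) / 2) - T ((x' - y') / 2))"
      by (simp add: a_def b_def field_simps)
    ultimately have "(x + y) / 2 + T ((x - y) / 2) - ((x' + y') / 2 + T ((x' - y') / 2))
                 = (a + b) / 2 + T ((a - b) / 2)"
      by simp
    then have "dist ((x + y) / 2 + T ((x - y) / 2)) ((x' + y') / 2 + T ((x' - y') / 2))
                 \<le> norm (a + b) / 2 + norm (a - b) / 2"
      using norm_triangle_ineq[of "(a + b) / 2" "T ((a - b) / 2)"]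
      by (simp add: dist_norm isometric norm_divide)
    also have "\<dots> \<le> norm a + norm b"
      using norm_triangle_ineq[of a b] norm_triangle_ineq4[of a b] by simp
    finally show ?thesis
      by (simp add: a_def b_def dist_norm)
  qed
  then have "continuous_map (prod_topology lu_topology lu_topology) lu_topology
               (\<lambda>p z. (fst p z + snd p z) / 2 + T ((fst p z - snd p z) / 2))"
    by (intro continuous_map_lu_pointwise[where C = 1]) auto
  then show ?thesis
    by (simp add: recombine_def[abs_def])
qed

lemma holomorphic_on_lu_closure_of:
  assumes hol: "\<And>\<phi>. \<phi> \<in> A \<Longrightarrow> \<phi> holomorphic_on unit_disk"
    and f: "f \<in> lu_topology closure_of A"
  shows "f holomorphic_on unit_disk"
  unfolding holomorphic_on_def
proof
  fix z assume z: "z \<in> unit_disk"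
  define r where "r = (1 - norm z) / 2"
  have r: "r > 0" "cball z r \<subseteq> unit_disk"
    using z by (auto simp: r_def cball_subset_ball_iff field_simps)
  have "\<exists>\<phi>\<in>A. \<forall>w\<in>cball z r. dist (\<phi> w) (f w) < 1 / Suc n" for n
    by (rule lu_closure_ofE[OF f compact_cball r(2), of "1 / Suc n"]) auto
  then obtain \<phi> where \<phi>: "\<And>n. \<phi> n \<in> A" "\<And>n. \<forall>w\<in>cball z r. dist (\<phi> n w) (f w) < 1 / Suc n"
    by metis
  have "uniform_limit (cball z r) \<phi> f sequentially"
    unfolding uniform_limit_sequentially_iff
  proof (intro allI impI)
    fix e :: real assume "e > 0"
    then obtain N where N: "1 / Suc N < e"
      by (rule nat_approx_posE)
    have "dist (\<phi> n w) (f w) < e" if "n \<ge> N" "w \<in> cball z r" for n w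
    proof -
      have "1 / real (Suc n) \<le> 1 / Suc N"
        using \<open>n \<ge> N\<close> by (simp add: frac_le)
      then show ?thesis
        using \<phi>(2)[of n] N \<open>w \<in> cball z r\<close> by fastforce
    qed
    then show "\<exists>N. \<forall>n\<ge>N. \<forall>w\<in>cball z r. dist (\<phi> n w) (f w) < e"
      by blast
  qed
  moreover have "continuous_on (cball z r) (\<phi> n) \<and> \<phi> n holomorphic_on ball z r" for n
  proof -
    have "\<phi> n holomorphic_on cball z r"
      using hol[OF \<phi>(1)] r(2) by (rule holomorphic_on_subset)
    then show ?thesis
      using holomorphic_on_imp_continuous_on holomorphic_on_subset[OF _ ball_subset_cball] by blast
  qed
  ultimately have "f holomorphic_on ball z r"
    using holomorphic_uniform_limit[of z r \<phi> sequentially f] by (simp add: always_eventually)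
  then show "f field_differentiable at z within unit_disk"
    using r(1) by (metis centre_in_ball field_differentiable_at_within holomorphic_on_imp_differentiable_at open_ball)
qed

lemma holomorphic_real_valued_imp_constant:
  assumes hol: "u holomorphic_on S" and S: "open S" "connected S"
    and real: "\<And>z. z \<in> S \<Longrightarrow> Im (u z) = 0"
  shows "u constant_on S"
proof (rule ccontr)
  assume nonconst: "\<not> u constant_on S"
  then obtain w where w: "w \<in> S"
    unfolding constant_on_def by blast
  have "open (u ` S)"
    using open_mapping_thm[OF hol S S(1) order_refl nonconst] .
  then obtain r where r: "r > 0" "ball (u w) r \<subseteq> u ` S"
    using w open_contains_ball by blast
  have "u w + \<i> * of_real (r / 2) \<in> ball (u w) r"
    using r(1) by (simp add: dist_norm norm_mult)
  then obtain x where "x \<in> S" "u x = u w + \<i> * of_real (r / 2)"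
    using r(2) by (metis imageE subsetD)
  then show False
    using real[of x] real[OF w] r(1) by simp
qed

lemma holomorphic_cnj_imp_constant:
  assumes hol: "g holomorphic_on S" and hol_cnj: "(\<lambda>z. cnj (g z)) holomorphic_on S"
    and S: "open S" "connected S"
  shows "g constant_on S"
proof -
  have "(\<lambda>z. g z + cnj (g z)) constant_on S"
    using hol hol_cnj S by (intro holomorphic_real_valued_imp_constant holomorphic_intros) auto
  moreover have "(\<lambda>z. \<i> * (g z - cnj (g z))) constant_on S"
    using hol hol_cnj S by (intro holomorphic_real_valued_imp_constant holomorphic_intros) auto
  ultimately obtain c1 c2 where "\<forall>z\<in>S. g z + cnj (g z) = c1" "\<forall>z\<in>S. \<i> * (g z - cnj (g z)) = c2"
    unfolding constant_on_def by blast
  then have "\<forall>z\<in>S. g z = (c1 - \<i> * c2) / 2"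
  proof (intro ballI)
    fix z assume "z \<in> S"
    then have "c1 - \<i> * c2 = (g z + cnj (g z)) - \<i> * (\<i> * (g z - cnj (g z)))"
      using \<open>\<forall>z\<in>S. _ = c1\<close> \<open>\<forall>z\<in>S. _ = c2\<close> by simp
    also have "\<dots> = 2 * g z"
      by (simp add: algebra_simps)
    finally show "g z = (c1 - \<i> * c2) / 2"
      by simp
  qed
  then show ?thesis
    unfolding constant_on_def by blast
qed

lemma holomorphic_on_disk_saturation:
  assumes hol: "\<And>\<phi>. \<phi> \<in> A \<Longrightarrow> \<phi> holomorphic_on unit_disk" and f: "f \<in> disk_saturation A"
  shows "f holomorphic_on unit_disk"
proof -
  obtain g where "g \<in> A" and agree: "\<forall>z\<in>unit_disk. f z = g z"
    using f unfolding disk_saturation_def by blast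
  then show ?thesis
    using holomorphic_transform[OF hol[OF \<open>g \<in> A\<close>], of f] by simp
qed

lemma disk_saturation_harmonic_analogue:
  "disk_saturation (harmonic_analogue G) = harmonic_analogue G"
proof
  show "disk_saturation (harmonic_analogue G) \<subseteq> harmonic_analogue G"
  proof
    fix f assume "f \<in> disk_saturation (harmonic_analogue G)"
    then obtain f' where "f' \<in> harmonic_analogue G" and agree: "\<forall>z\<in>unit_disk. f z = f' z"
      unfolding disk_saturation_def by blast
    then obtain h g where "h holomorphic_on unit_disk" "g holomorphic_on unit_disk"
      "\<forall>z\<in>unit_disk. f' z = h z + cnj (g z)"
      "\<forall>\<epsilon>::complex. norm \<epsilon> = 1 \<longrightarrow> (\<exists>\<phi>\<in>G. \<forall>z\<in>unit_disk. \<phi> z = h z + \<epsilon> * g z)"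
      unfolding harmonic_analogue_def by blast
    moreover from this(3) have "\<forall>z\<in>unit_disk. f z = h z + cnj (g z)"
      using agree by simp
    ultimately show "f \<in> harmonic_analogue G"
      unfolding harmonic_analogue_def by blast
  qed
qed (rule subset_disk_saturation)

lemma subset_harmonic_analogue:
  assumes "\<And>\<phi>. \<phi> \<in> G \<Longrightarrow> \<phi> holomorphic_on unit_disk"
  shows "G \<subseteq> harmonic_analogue G"
proof
  fix \<phi> assume "\<phi> \<in> G"
  then show "\<phi> \<in> harmonic_analogue G"
    unfolding harmonic_analogue_def
    by (intro CollectI exI[of _ \<phi>] exI[of _ "\<lambda>_. 0"] conjI allI impI bexI[of _ \<phi>])
      (simp_all add: assms)
qed

lemma holomorphic_harmonic_analogue_in_disk_saturation:
  assumes zero: "\<And>\<phi>. \<phi> \<in> G \<Longrightarrow> \<phi> 0 = 0"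
    and f: "f \<in> harmonic_analogue G" and hol: "f holomorphic_on unit_disk"
  shows "f \<in> disk_saturation G"
proof -
  obtain h g where hol_h: "h holomorphic_on unit_disk" and hol_g: "g holomorphic_on unit_disk"
    and f_eq: "\<forall>z\<in>unit_disk. f z = h z + cnj (g z)"
    and rotations: "\<forall>\<epsilon>::complex. norm \<epsilon> = 1 \<longrightarrow> (\<exists>\<phi>\<in>G. \<forall>z\<in>unit_disk. \<phi> z = h z + \<epsilon> * g z)"
    using f unfolding harmonic_analogue_def by blast
  have "(\<lambda>z. f z - h z) holomorphic_on unit_disk"
    using hol hol_h by (rule holomorphic_on_diff)
  then have "(\<lambda>z. cnj (g z)) holomorphic_on unit_disk"
    by (rule holomorphic_transform) (simp add: f_eq)
  then have "g constant_on unit_disk"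
    using hol_g by (intro holomorphic_cnj_imp_constant) auto
  then obtain c where g_eq: "\<forall>z\<in>unit_disk. g z = c"
    unfolding constant_on_def by blast
  obtain \<phi>1 where "\<phi>1 \<in> G" and \<phi>1: "\<forall>z\<in>unit_disk. \<phi>1 z = h z + g z"
    using rotations[rule_format, of 1] by auto
  obtain \<phi>2 where "\<phi>2 \<in> G" and \<phi>2: "\<forall>z\<in>unit_disk. \<phi>2 z = h z - g z"
    using rotations[rule_format, of "-1"] by auto
  have sum: "h 0 + g 0 = 0" and diff: "h 0 - g 0 = 0"
    using \<phi>1 \<phi>2 zero[OF \<open>\<phi>1 \<in> G\<close>] zero[OF \<open>\<phi>2 \<in> G\<close>] by simp_all
  have "2 * g 0 = (h 0 + g 0) - (h 0 - g 0)"
    by (simp add: algebra_simps)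
  then have "c = 0"
    unfolding sum diff using g_eq by simp
  then have "\<forall>z\<in>unit_disk. f z = \<phi>1 z"
    using f_eq g_eq \<phi>1 by simp
  then show ?thesis
    unfolding disk_saturation_def using \<open>\<phi>1 \<in> G\<close> by blast
qed

text \<open>Encoding \<open>(h, g)\<close> as \<open>(h + g, h - g)\<close> puts these pairs inside the saturation of \<open>G \<times> G\<close>.\<close>
definition harmonic_pairs ::
    "(complex \<Rightarrow> complex) set \<Rightarrow> ((complex \<Rightarrow> complex) \<times> (complex \<Rightarrow> complex)) set" where
  "harmonic_pairs G = {p. \<forall>\<epsilon>. norm \<epsilon> = 1 \<longrightarrow> recombine ((*) \<epsilon>) p \<in> disk_saturation G}"

lemma harmonic_pairs_subset: "harmonic_pairs G \<subseteq> disk_saturation G \<times> disk_saturation G"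
proof
  fix p assume "p \<in> harmonic_pairs G"
  then have "recombine ((*) 1) p \<in> disk_saturation G" "recombine ((*) (-1)) p \<in> disk_saturation G"
    unfolding harmonic_pairs_def by auto
  then show "p \<in> disk_saturation G \<times> disk_saturation G"
    by (simp add: recombine_scale_one recombine_scale_minus_one mem_Times_iff)
qed

lemma compactin_harmonic_pairs:
  assumes "compactin lu_topology G"
  shows "compactin (prod_topology lu_topology lu_topology) (harmonic_pairs G)"
proof (rule closed_compactin)
  show "compactin (prod_topology lu_topology lu_topology) (disk_saturation G \<times> disk_saturation G)"
    using compactin_disk_saturation[OF assms] by (simp add: compactin_Times)
  have "closedin (prod_topology lu_topology lu_topology) {p. recombine ((*) \<epsilon>) p \<in> disk_saturation G}"
    if "norm \<epsilon> = 1" for \<epsilon> :: complex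
    using closedin_continuous_map_preimage[OF continuous_map_recombine closedin_disk_saturation[OF assms]]
      that by (simp add: right_diff_distrib norm_mult)
  then have "closedin (prod_topology lu_topology lu_topology)
               (\<Inter>\<epsilon>\<in>sphere 0 1. {p. recombine ((*) \<epsilon>) p \<in> disk_saturation G})"
    by (intro closedin_Inter) auto
  moreover have "harmonic_pairs G = (\<Inter>\<epsilon>\<in>sphere 0 1. {p. recombine ((*) \<epsilon>) p \<in> disk_saturation G})"
    unfolding harmonic_pairs_def by auto
  ultimately show "closedin (prod_topology lu_topology lu_topology) (harmonic_pairs G)"
    by simp
qed (rule harmonic_pairs_subset)

lemma recombine_cnj_harmonic_pairs:
  assumes hol: "\<And>\<phi>. \<phi> \<in> G \<Longrightarrow> \<phi> holomorphic_on unit_disk"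
  shows "recombine cnj ` harmonic_pairs G \<subseteq> harmonic_analogue G"
proof clarify
  fix a b assume ab: "(a, b) \<in> harmonic_pairs G"
  define h g where "h z = (a z + b z) / 2" and "g z = (a z - b z) / 2" for z
  have "a \<in> disk_saturation G" "b \<in> disk_saturation G"
    using ab harmonic_pairs_subset by auto
  then have "h holomorphic_on unit_disk" "g holomorphic_on unit_disk"
    using holomorphic_on_disk_saturation[OF hol] unfolding h_def g_def
    by (auto intro!: holomorphic_intros)
  moreover have "\<exists>\<phi>\<in>G. \<forall>z\<in>unit_disk. \<phi> z = h z + \<epsilon> * g z" if "norm \<epsilon> = 1" for \<epsilon>
  proof -
    have "recombine ((*) \<epsilon>) (a, b) = (\<lambda>z. h z + \<epsilon> * g z)"
      by (simp add: recombine_def h_def g_def)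
    moreover have "recombine ((*) \<epsilon>) (a, b) \<in> disk_saturation G"
      using ab that unfolding harmonic_pairs_def by blast
    ultimately obtain \<phi> where "\<phi> \<in> G" "\<forall>z\<in>unit_disk. h z + \<epsilon> * g z = \<phi> z"
      unfolding disk_saturation_def by auto
    then show ?thesis
      by (metis (no_types))
  qed
  ultimately have "(\<lambda>z. h z + cnj (g z)) \<in> harmonic_analogue G"
    unfolding harmonic_analogue_def by blast
  moreover have "recombine cnj (a, b) = (\<lambda>z. h z + cnj (g z))"
    by (simp add: recombine_def h_def g_def)
  ultimately show "recombine cnj (a, b) \<in> harmonic_analogue G"
    by simp
qed

lemma harmonic_analogue_subset_recombine_cnj:
  "harmonic_analogue G \<subseteq> disk_saturation (recombine cnj ` harmonic_pairs G)"
proof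
  fix f assume "f \<in> harmonic_analogue G"
  then obtain h g where f_eq: "\<forall>z\<in>unit_disk. f z = h z + cnj (g z)"
    and rotations: "\<forall>\<epsilon>::complex. norm \<epsilon> = 1 \<longrightarrow> (\<exists>\<phi>\<in>G. \<forall>z\<in>unit_disk. \<phi> z = h z + \<epsilon> * g z)"
    unfolding harmonic_analogue_def by blast
  define p where "p = (\<lambda>z. h z + g z, \<lambda>z. h z - g z)"
  have "recombine ((*) \<epsilon>) p \<in> disk_saturation G" if unit: "norm \<epsilon> = 1" for \<epsilon>
  proof -
    obtain \<phi> where "\<phi> \<in> G" "\<forall>z\<in>unit_disk. \<phi> z = h z + \<epsilon> * g z"
      using rotations unit by blast
    then show ?thesis
      unfolding p_def recombine_sum_diff disk_saturation_def by (intro CollectI bexI[of _ \<phi>]) auto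
  qed
  then have "p \<in> harmonic_pairs G"
    unfolding harmonic_pairs_def by blast
  moreover have "recombine cnj p = (\<lambda>z. h z + cnj (g z))"
    unfolding p_def by (rule recombine_sum_diff)
  ultimately have "(\<lambda>z. h z + cnj (g z)) \<in> recombine cnj ` harmonic_pairs G"
    by (metis imageI)
  then show "f \<in> disk_saturation (recombine cnj ` harmonic_pairs G)"
    unfolding disk_saturation_def using f_eq by (intro CollectI bexI) auto
qed

lemma compactin_harmonic_analogue:
  assumes hol: "\<And>\<phi>. \<phi> \<in> G \<Longrightarrow> \<phi> holomorphic_on unit_disk"
    and compact: "compactin lu_topology G"
  shows "compactin lu_topology (harmonic_analogue G)"
proof (rule compactin_lu_transfer)
  have "continuous_map (prod_topology lu_topology lu_topology) lu_topology (recombine cnj)"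
    by (rule continuous_map_recombine) simp_all
  then show "compactin lu_topology (recombine cnj ` harmonic_pairs G)"
    by (rule image_compactin[OF compactin_harmonic_pairs[OF compact]])
  show "harmonic_analogue G \<subseteq> disk_saturation (recombine cnj ` harmonic_pairs G)"
    by (rule harmonic_analogue_subset_recombine_cnj)
  show "recombine cnj ` harmonic_pairs G \<subseteq> disk_saturation (harmonic_analogue G)"
    by (rule order_trans[OF recombine_cnj_harmonic_pairs[OF hol] subset_disk_saturation])
qed

lemma compactin_if_compactin_harmonic_analogue:
  assumes hol: "\<And>\<phi>. \<phi> \<in> G \<Longrightarrow> \<phi> holomorphic_on unit_disk"
    and zero: "\<And>\<phi>. \<phi> \<in> G \<Longrightarrow> \<phi> 0 = 0"
    and compact: "compactin lu_topology (harmonic_analogue G)"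
  shows "compactin lu_topology G"
proof -
  define D where "D = lu_topology closure_of G"
  have "closedin lu_topology (harmonic_analogue G)"
    using closedin_disk_saturation[OF compact] by (simp only: disk_saturation_harmonic_analogue)
  with subset_harmonic_analogue[OF hol] have D_sub: "D \<subseteq> harmonic_analogue G"
    unfolding D_def by (rule closure_of_minimal)
  have "compactin lu_topology D"
    unfolding D_def by (rule closed_compactin[OF compact D_sub[unfolded D_def] closedin_closure_of])
  moreover have "G \<subseteq> disk_saturation D"
    unfolding D_def by (rule order_trans[OF closure_of_subset subset_disk_saturation]) simp
  moreover have "D \<subseteq> disk_saturation G"
  proof
    fix f assume "f \<in> D"
    have "f holomorphic_on unit_disk"
      using hol \<open>f \<in> D\<close> unfolding D_def by (rule holomorphic_on_lu_closure_of)
    then show "f \<in> disk_saturation G"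
      using zero D_sub \<open>f \<in> D\<close> by (intro holomorphic_harmonic_analogue_in_disk_saturation) auto
  qed
  ultimately show ?thesis
    by (rule compactin_lu_transfer)
qed

theorem theorem2p7:
  fixes G :: "(complex \<Rightarrow> complex) set"
  assumes "G \<subseteq> class_S"
  shows "compactin lu_topology G \<longleftrightarrow> compactin lu_topology (harmonic_analogue G)"
proof -
  have hol: "\<phi> holomorphic_on unit_disk" and zero: "\<phi> 0 = 0" if "\<phi> \<in> G" for \<phi>
    using assms that unfolding class_S_def by auto
  show ?thesis
    using hol zero compactin_harmonic_analogue compactin_if_compactin_harmonic_analogue by meson
qed

end
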